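(* Let $X=[x_0,\ldots,x_k]$ be $k+1$ linearly independent unit vectors of $\mathbb R^{n+1}$, viewed as points of the unit sphere $\mathcal S_n$ with its canonical metric. Then $\mathrm{EBS}(x_0,\ldots,x_k)\subseteq \mathrm{Span}\{x_0,\ldots,x_k\}\cap\mathcal S_n$, and the affine span $\mathrm{Aff}(x_0,\ldots,x_k)$ equals $\mathrm{Span}\{x_0,\ldots,x_k\}\cap\mathcal S_n$, i.e. the great $k$-dimensional subsphere containing the reference points. In particular the affine span depends on the reference points only through the linear subspace $\mathrm{Span}\{x_0,\ldots,x_k\}$.
   Context: On $\mathcal S_n$ the cut locus of $x$ is $\{-x\}$ and $\log_x(y)=\frac{\theta}{\sin\theta}(y-\cos\theta\,x)$ with $\theta=\arccos(x^\top y)$. For reference points $x_0,\ldots,x_k$, $\mathcal M^*=\mathcal S_n\setminus\{-x_0,\ldots,-x_k\}$; $\mathcal P^*_k=\{(\lambda_0:\cdots:\lambda_k)\in\mathbb RP^k:\sum_i\lambda_i\neq0\}$; $\mathrm{EBS}(x_0,\ldots,x_k)=\{x\in\mathcal M^*:\exists\lambda\in\mathcal P^*_k,\ \sum_i\lambda_i\log_x(x_i)=0\}$; the affine span $\mathrm{Aff}(x_0,\ldots,x_k)$ is the closure of $\mathrm{EBS}(x_0,\ldots,x_k)$ in $\mathcal S_n$. *)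

theory Defs
  imports "HOL-Analysis.Analysis"
begin

definition usphere :: "'a::euclidean_space set" where
  "usphere = {x. norm x = 1}"

definition sph_log :: "'a::euclidean_space \<Rightarrow> 'a \<Rightarrow> 'a" where
  "sph_log x y = (let \<theta> = arccos (x \<bullet> y) in (\<theta> / sin \<theta>) *\<^sub>R (y - cos \<theta> *\<^sub>R x))"

text \<open>M* = S_n minus the antipodes (cut points) of the reference points x_0..x_k.\<close>
definition Mstar :: "(nat \<Rightarrow> 'a::euclidean_space) \<Rightarrow> nat \<Rightarrow> 'a set" where
  "Mstar X k = usphere - {- X i | i. i \<le> k}"

text \<open>A point of P*_k is represented by any
  representative weight vector lambda with sum lambda_i \<noteq> 0; the condition is
  invariant under rescaling, so this is the unfolded projective definition.\<close>
definition EBS :: "(nat \<Rightarrow> 'a::euclidean_space) \<Rightarrow> nat \<Rightarrow> 'a set" where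
  "EBS X k = {x \<in> Mstar X k. \<exists>w::nat \<Rightarrow> real.
      (\<Sum>i\<le>k. w i) \<noteq> 0 \<and> (\<Sum>i\<le>k. w i *\<^sub>R sph_log x (X i)) = 0}"

text \<open>Affine span: closure of EBS (S_n is closed, so closure in S_n equals closure
  in the ambient space).\<close>
definition Aff :: "(nat \<Rightarrow> 'a::euclidean_space) \<Rightarrow> nat \<Rightarrow> 'a set" where
  "Aff X k = closure (EBS X k)"

end

theory Submission
  imports Defs "HOL-Complex_Analysis.Complex_Analysis"
begin

text \<open>For a unit vector \<open>x\<close> off the antipodes, \<open>\<Sum> w\<^sub>i log\<^sub>x(x\<^sub>i) = 0\<close> says that
  \<open>\<Sum> w\<^sub>i (\<theta>\<^sub>i / sin \<theta>\<^sub>i) x\<^sub>i\<close> is a multiple of \<open>x\<close>; so the barycentric subspace lies in the span,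
  and a point \<open>x = \<Sum> a\<^sub>i x\<^sub>i\<close> of the span belongs to it as soon as its weight
  \<open>\<Sum> a\<^sub>i sin \<theta>\<^sub>i / \<theta>\<^sub>i\<close> is nonzero. If all \<open>a\<^sub>i\<close> are negative, so is the weight. Otherwise
  move from \<open>x\<close> along the chord towards some \<open>x\<^sub>m\<close> with \<open>a\<^sub>m \<ge> 0\<close> and renormalise: the
  weight of the moving point is real-analytic in the parameter and tends to \<open>1\<close> at \<open>x\<^sub>m\<close>,
  so by the identity theorem it is nonzero at points arbitrarily close to \<open>x\<close>.\<close>

section \<open>Unit vectors and coordinates\<close>

lemma unit_inner_eq_1_iff:
  fixes x y :: "'a::real_inner"
  assumes "norm x = 1" "norm y = 1"
  shows "x \<bullet> y = 1 \<longleftrightarrow> x = y"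
  using norm_cauchy_schwarz_eq[of x y] assms by auto

lemma unit_inner_eq_minus_1_iff:
  fixes x y :: "'a::real_inner"
  assumes "norm x = 1" "norm y = 1"
  shows "x \<bullet> y = -1 \<longleftrightarrow> x = - y"
  using unit_inner_eq_1_iff[of x "- y"] assms by auto

lemma abs_inner_unit_le_1:
  fixes x y :: "'a::real_inner"
  assumes "norm x = 1" "norm y = 1"
  shows "\<bar>x \<bullet> y\<bar> \<le> 1"
  using Cauchy_Schwarz_ineq2[of x y] assms by simp

lemma abs_inner_unit_less_1:
  fixes x y :: "'a::real_inner"
  assumes "norm x = 1" "norm y = 1" "x \<noteq> y" "x \<noteq> - y"
  shows "\<bar>x \<bullet> y\<bar> < 1"
  using abs_inner_unit_le_1[OF assms(1,2)] unit_inner_eq_1_iff[OF assms(1,2)]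
    unit_inner_eq_minus_1_iff[OF assms(1,2)] assms(3,4) by (auto simp: abs_if)

lemma sum_delta_scaleR:
  fixes X :: "nat \<Rightarrow> 'a::real_vector"
  assumes "j \<le> k"
  shows "(\<Sum>i\<le>k. (if i = j then r else 0) *\<^sub>R X i) = r *\<^sub>R X j"
  using assms by (simp add: if_distrib[of "\<lambda>c. c *\<^sub>R _"] sum.delta cong: if_cong)

lemma span_family_sum_repr:
  fixes X :: "nat \<Rightarrow> 'a::real_vector"
  assumes "inj_on X {..k}" "x \<in> span (X ` {..k})"
  obtains a where "x = (\<Sum>i\<le>k. a i *\<^sub>R X i)"
proof -
  obtain u where "x = (\<Sum>v\<in>X ` {..k}. u v *\<^sub>R v)"
    using assms(2) span_finite[of "X ` {..k}"] by auto
  also have "\<dots> = (\<Sum>i\<le>k. u (X i) *\<^sub>R X i)"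
    using sum.reindex[OF assms(1)] by simp
  finally show ?thesis by (rule that)
qed

lemma independent_family_sum_eq_0:
  fixes X :: "nat \<Rightarrow> 'a::real_vector"
  assumes inj: "inj_on X {..k}" and ind: "independent (X ` {..k})"
    and sum0: "(\<Sum>i\<le>k. a i *\<^sub>R X i) = 0" and i: "i \<le> k"
  shows "a i = 0"
proof -
  define u where "u v = a (the_inv_into {..k} X v)" for v
  have "(\<Sum>v\<in>X ` {..k}. u v *\<^sub>R v) = (\<Sum>i\<le>k. a i *\<^sub>R X i)"
    using sum.reindex[OF inj, of "\<lambda>v. u v *\<^sub>R v"] by (simp add: u_def the_inv_into_f_f[OF inj])
  then have "u (X i) = 0"
    using independentD[OF ind _ subset_refl, of u "X i"] sum0 i by simp
  then show ?thesis by (simp add: u_def the_inv_into_f_f[OF inj] i)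
qed

lemma independent_family_coeffs_unique:
  fixes X :: "nat \<Rightarrow> 'a::real_vector"
  assumes "inj_on X {..k}" "independent (X ` {..k})"
    and "(\<Sum>i\<le>k. a i *\<^sub>R X i) = (\<Sum>i\<le>k. b i *\<^sub>R X i)" and "i \<le> k"
  shows "a i = b i"
proof -
  have "(\<Sum>i\<le>k. (a i - b i) *\<^sub>R X i) = 0"
    using assms(3) by (simp add: scaleR_diff_left sum_subtractf)
  then show ?thesis using independent_family_sum_eq_0[OF assms(1,2) _ assms(4), of "\<lambda>i. a i - b i"] by simp
qed

lemma independent_family_coeffs_of_scaled_member:
  fixes X :: "nat \<Rightarrow> 'a::real_vector"
  assumes "inj_on X {..k}" "independent (X ` {..k})"
    and "(\<Sum>i\<le>k. a i *\<^sub>R X i) = l *\<^sub>R X j" and "j \<le> k" "i \<le> k"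
  shows "a i = (if i = j then l else 0)"
proof -
  have "(\<Sum>i\<le>k. a i *\<^sub>R X i) = (\<Sum>i\<le>k. (if i = j then l else 0) *\<^sub>R X i)"
    using assms(3) by (simp only: sum_delta_scaleR[OF assms(4)])
  then show ?thesis by (rule independent_family_coeffs_unique[OF assms(1,2) _ assms(5)])
qed

section \<open>The spherical logarithm and the sinc weight\<close>

text \<open>For \<open>u = cos \<theta>\<close> this is \<open>sin \<theta> / \<theta>\<close>, the reciprocal of the coefficient \<open>\<theta> / sin \<theta>\<close>
  of the spherical logarithm. At \<open>u = \<plusminus>1\<close> both are \<open>0\<close>, by the junk value of division by zero.\<close>
definition sinc_arccos :: "real \<Rightarrow> real" where
  "sinc_arccos u = sin (arccos u) / arccos u"

lemma abs_sinc_arccos_le_1: "\<bar>sinc_arccos u\<bar> \<le> 1"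
  using abs_sin_x_le_abs_x[of "arccos u"]
  by (cases "arccos u = 0") (auto simp: sinc_arccos_def abs_divide divide_le_eq_1)

lemma sinc_arccos_pos:
  assumes "\<bar>u\<bar> < 1"
  shows "0 < sinc_arccos u"
proof -
  have "0 < arccos u" "arccos u < pi"
    using assms arccos_lt_bounded[of u] by (auto simp: abs_less_iff)
  then show ?thesis by (simp add: sinc_arccos_def sin_gt_zero)
qed

lemma tendsto_sinc_arccos_1: "(sinc_arccos \<longlongrightarrow> 1) (at_left 1)"
proof -
  have sinc_at_0: "((\<lambda>x. sin x / x :: real) \<longlongrightarrow> 1) (at 0)"
    using DERIV_sin[of 0] by (auto simp: has_field_derivative_def field_has_derivative_at)
  have near_1: "eventually (\<lambda>u. u \<in> {-1<..<1}) (at_left (1::real))"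
    by (rule eventually_at_left_real) simp
  then have "eventually (\<lambda>u. arccos u \<noteq> 0) (at_left (1::real))"
    by eventually_elim (auto simp: arccos_eq_0_iff)
  moreover have "(arccos \<longlongrightarrow> arccos 1) (at_left 1)"
    by (rule continuous_on_tendsto_compose[OF continuous_on_arccos' tendsto_ident_at])
       (use near_1 in \<open>auto elim: eventually_mono\<close>)
  ultimately have "filterlim arccos (at 0) (at_left 1)"
    by (intro filterlim_atI) auto
  from filterlim_compose[OF sinc_at_0 this] show ?thesis
    by (simp add: sinc_arccos_def[abs_def])
qed

lemma sph_log_unit:
  fixes x y :: "'a::euclidean_space"
  assumes "norm x = 1" "norm y = 1"
  shows "sph_log x y = inverse (sinc_arccos (x \<bullet> y)) *\<^sub>R (y - (x \<bullet> y) *\<^sub>R x)"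
  using abs_inner_unit_le_1[OF assms]
  by (simp add: sph_log_def sinc_arccos_def Let_def cos_arccos_abs)

lemma sinc_arccos_scaleR_sph_log:
  fixes x y :: "'a::euclidean_space"
  assumes "norm x = 1" "norm y = 1" "x \<noteq> - y"
  shows "sinc_arccos (x \<bullet> y) *\<^sub>R sph_log x y = y - (x \<bullet> y) *\<^sub>R x"
proof (cases "x = y")
  case True
  then show ?thesis using assms(1) by (simp add: sph_log_unit dot_square_norm)
next
  case False
  then have "sinc_arccos (x \<bullet> y) \<noteq> 0"
    using sinc_arccos_pos[OF abs_inner_unit_less_1[OF assms(1,2) False assms(3)]] by simp
  then show ?thesis by (simp add: sph_log_unit[OF assms(1,2)])
qed

lemma in_EBS_if_sinc_weight_nonzero:
  fixes X :: "nat \<Rightarrow> 'a::euclidean_space"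
  assumes y: "norm y = 1" and X: "\<forall>i\<le>k. norm (X i) = 1" and not_antipodal: "\<forall>i\<le>k. y \<noteq> - X i"
    and y_coords: "y = (\<Sum>i\<le>k. b i *\<^sub>R X i)"
    and weight: "(\<Sum>i\<le>k. b i * sinc_arccos (y \<bullet> X i)) \<noteq> 0"
  shows "y \<in> EBS X k"
proof -
  define w where "w i = b i * sinc_arccos (y \<bullet> X i)" for i
  have "w i *\<^sub>R sph_log y (X i) = b i *\<^sub>R X i - (b i * (y \<bullet> X i)) *\<^sub>R y" if "i \<le> k" for i
  proof -
    have "w i *\<^sub>R sph_log y (X i) = b i *\<^sub>R (sinc_arccos (y \<bullet> X i) *\<^sub>R sph_log y (X i))"
      by (simp add: w_def)
    then show ?thesis
      using sinc_arccos_scaleR_sph_log[OF y, of "X i"] X not_antipodal that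
      by (simp add: scaleR_diff_right)
  qed
  then have "(\<Sum>i\<le>k. w i *\<^sub>R sph_log y (X i))
      = (\<Sum>i\<le>k. b i *\<^sub>R X i) - (\<Sum>i\<le>k. b i * (y \<bullet> X i)) *\<^sub>R y"
    by (simp add: sum_subtractf scaleR_sum_left)
  also have "(\<Sum>i\<le>k. b i * (y \<bullet> X i)) = y \<bullet> y"
    by (subst (2) y_coords) (simp add: inner_sum_right)
  finally have "(\<Sum>i\<le>k. w i *\<^sub>R sph_log y (X i)) = 0"
    using y y_coords by (simp add: dot_square_norm)
  moreover have "y \<in> Mstar X k" using y not_antipodal by (auto simp: Mstar_def usphere_def)
  ultimately show ?thesis using weight unfolding EBS_def w_def by blast
qed

lemma EBS_subset_span_inter_usphere:
  fixes X :: "nat \<Rightarrow> 'a::euclidean_space"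
  assumes X: "\<forall>i\<le>k. norm (X i) = 1" and inj: "inj_on X {..k}" and ind: "independent (X ` {..k})"
  shows "EBS X k \<subseteq> span (X ` {..k}) \<inter> usphere"
proof
  fix x assume "x \<in> EBS X k"
  then obtain w where x: "x \<in> Mstar X k" and w_sum: "(\<Sum>i\<le>k. w i) \<noteq> 0"
    and balanced: "(\<Sum>i\<le>k. w i *\<^sub>R sph_log x (X i)) = 0" unfolding EBS_def by blast
  have x1: "norm x = 1" and not_antipodal: "\<forall>i\<le>k. x \<noteq> - X i"
    using x by (auto simp: Mstar_def usphere_def)
  define c where "c i = w i * inverse (sinc_arccos (x \<bullet> X i))" for i
  define l where "l = (\<Sum>i\<le>k. c i * (x \<bullet> X i))"
  have "(\<Sum>i\<le>k. w i *\<^sub>R sph_log x (X i)) = (\<Sum>i\<le>k. c i *\<^sub>R X i) - l *\<^sub>R x"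
    using X by (simp add: sph_log_unit[OF x1] c_def l_def scaleR_diff_right sum_subtractf
        scaleR_sum_left algebra_simps)
  then have combination: "(\<Sum>i\<le>k. c i *\<^sub>R X i) = l *\<^sub>R x"
    using balanced by simp
  have "x \<in> span (X ` {..k})"
  proof (cases "l = 0")
    case False
    have "inverse l *\<^sub>R (\<Sum>i\<le>k. c i *\<^sub>R X i) \<in> span (X ` {..k})"
      by (intro span_scale span_sum span_base) auto
    then show ?thesis using False by (simp add: combination)
  next
    case True
    obtain j where j: "j \<le> k" "w j \<noteq> 0"
      using w_sum by (metis (no_types, lifting) atMost_iff sum.neutral)
    have "c j = 0"
      using independent_family_sum_eq_0[OF inj ind _ j(1)] combination True by simp
    then have "sinc_arccos (x \<bullet> X j) = 0" using j(2) by (simp add: c_def)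
    then have "x = X j"
      using sinc_arccos_pos[OF abs_inner_unit_less_1[OF x1, of "X j"]] X not_antipodal j(1)
      by fastforce
    then show ?thesis using j(1) by (auto intro: span_base)
  qed
  then show "x \<in> span (X ` {..k}) \<inter> usphere" using x1 by (simp add: usphere_def)
qed

lemma member_in_EBS:
  fixes X :: "nat \<Rightarrow> 'a::euclidean_space"
  assumes X: "\<forall>i\<le>k. norm (X i) = 1" and inj: "inj_on X {..k}" and ind: "independent (X ` {..k})"
    and m: "m \<le> k"
  shows "X m \<in> EBS X k"
proof -
  have Xm: "norm (X m) = 1" using X m by simp
  have "X m \<noteq> - X i" if i: "i \<le> k" for i
  proof
    assume "X m = - X i"
    then have "(\<Sum>j\<le>k. (if j = m then 1 else 0) *\<^sub>R X j) = (- 1) *\<^sub>R X i"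
      using sum_delta_scaleR[OF m, of 1 X] by simp
    from independent_family_coeffs_of_scaled_member[OF inj ind this i m] show False
      by (simp split: if_splits)
  qed
  then have "X m \<in> Mstar X k" using Xm by (auto simp: Mstar_def usphere_def)
  moreover have "(\<Sum>j\<le>k. (if j = m then 1 else 0) *\<^sub>R sph_log (X m) (X j)) = 0"
    using sum_delta_scaleR[OF m, of 1 "\<lambda>j. sph_log (X m) (X j)"] Xm
    by (simp add: sph_log_def dot_square_norm)
  moreover have "(\<Sum>j\<le>k. if j = m then 1 else 0 :: real) \<noteq> 0" using m by simp
  ultimately show ?thesis unfolding EBS_def by blast
qed

lemma negative_coords_in_EBS:
  fixes X :: "nat \<Rightarrow> 'a::euclidean_space"
  assumes "1 \<le> k" and X: "\<forall>i\<le>k. norm (X i) = 1" and inj: "inj_on X {..k}"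
    and ind: "independent (X ` {..k})"
    and x: "norm x = 1" "x = (\<Sum>i\<le>k. a i *\<^sub>R X i)" and neg: "\<forall>i\<le>k. a i < 0"
  shows "x \<in> EBS X k"
proof (rule in_EBS_if_sinc_weight_nonzero[OF x(1) X _ x(2)])
  have not_parallel: "x \<noteq> l *\<^sub>R X i" if i: "i \<le> k" for i l
  proof
    assume "x = l *\<^sub>R X i"
    then have coeffs: "a j = (if j = i then l else 0)" if "j \<le> k" for j
      using independent_family_coeffs_of_scaled_member[OF inj ind _ i that] x(2) by simp
    define j where "j = (if i = 0 then 1 else 0 :: nat)"
    have "j \<le> k" "j \<noteq> i" using \<open>1 \<le> k\<close> by (auto simp: j_def)
    then show False using coeffs[of j] neg by auto
  qed
  then show "\<forall>i\<le>k. x \<noteq> - X i" by (metis scaleR_minus1_left)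
  have "0 < (\<Sum>i\<le>k. - (a i * sinc_arccos (x \<bullet> X i)))"
  proof (rule sum_pos)
    fix i assume i: "i \<in> {..k}"
    have "0 < sinc_arccos (x \<bullet> X i)"
      using not_parallel[of i 1] not_parallel[of i "-1"] X i
      by (intro sinc_arccos_pos abs_inner_unit_less_1[OF x(1)]) auto
    then show "0 < - (a i * sinc_arccos (x \<bullet> X i))"
      using neg i by (simp add: mult_neg_pos)
  qed auto
  then show "(\<Sum>i\<le>k. a i * sinc_arccos (x \<bullet> X i)) \<noteq> 0" by (simp add: sum_negf)
qed

section \<open>Real functions with a holomorphic extension\<close>

text \<open>For open \<open>I\<close> this is real analyticity, in the form to which the identity theorem applies.\<close>
definition extends_holomorphically :: "(real \<Rightarrow> real) \<Rightarrow> real set \<Rightarrow> bool" where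
  "extends_holomorphically f I \<longleftrightarrow>
     (\<exists>F S. open S \<and> of_real ` I \<subseteq> S \<and> F holomorphic_on S \<and> (\<forall>t\<in>I. F (of_real t) = of_real (f t)))"

lemma extends_holomorphicallyI:
  assumes "open S" "of_real ` I \<subseteq> S" "F holomorphic_on S" "\<And>t. t \<in> I \<Longrightarrow> F (of_real t) = of_real (f t)"
  shows "extends_holomorphically f I"
  using assms unfolding extends_holomorphically_def by blast

lemma extends_holomorphically_const: "extends_holomorphically (\<lambda>_. c) I"
  by (rule extends_holomorphicallyI[of UNIV _ "\<lambda>_. of_real c"]) auto

lemma extends_holomorphically_ident: "extends_holomorphically (\<lambda>t. t) I"
  by (rule extends_holomorphicallyI[of UNIV _ "\<lambda>z. z"]) auto

lemma extends_holomorphically_add: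
  assumes "extends_holomorphically f I" "extends_holomorphically g I"
  shows "extends_holomorphically (\<lambda>t. f t + g t) I"
proof -
  obtain F S G T where "open S" "of_real ` I \<subseteq> S" "F holomorphic_on S" "\<forall>t\<in>I. F (of_real t) = of_real (f t)"
    and "open T" "of_real ` I \<subseteq> T" "G holomorphic_on T" "\<forall>t\<in>I. G (of_real t) = of_real (g t)"
    using assms unfolding extends_holomorphically_def by blast
  then show ?thesis
    by (intro extends_holomorphicallyI[of "S \<inter> T" _ "\<lambda>z. F z + G z"])
       (auto intro!: holomorphic_intros elim: holomorphic_on_subset)
qed

lemma extends_holomorphically_mult:
  assumes "extends_holomorphically f I" "extends_holomorphically g I"
  shows "extends_holomorphically (\<lambda>t. f t * g t) I"
proof -
  obtain F S G T where "open S" "of_real ` I \<subseteq> S" "F holomorphic_on S" "\<forall>t\<in>I. F (of_real t) = of_real (f t)"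
    and "open T" "of_real ` I \<subseteq> T" "G holomorphic_on T" "\<forall>t\<in>I. G (of_real t) = of_real (g t)"
    using assms unfolding extends_holomorphically_def by blast
  then show ?thesis
    by (intro extends_holomorphicallyI[of "S \<inter> T" _ "\<lambda>z. F z * G z"])
       (auto intro!: holomorphic_intros elim: holomorphic_on_subset)
qed

lemma extends_holomorphically_diff:
  assumes "extends_holomorphically f I" "extends_holomorphically g I"
  shows "extends_holomorphically (\<lambda>t. f t - g t) I"
  using extends_holomorphically_add[OF assms(1)
      extends_holomorphically_mult[OF extends_holomorphically_const assms(2)], of "-1"]
  by simp

lemma extends_holomorphically_sum:
  assumes "\<And>i. i \<in> K \<Longrightarrow> extends_holomorphically (f i) I"
  shows "extends_holomorphically (\<lambda>t. \<Sum>i\<in>K. f i t) I"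
  using assms
  by (induction K rule: infinite_finite_induct)
     (auto intro: extends_holomorphically_const extends_holomorphically_add)

lemma extends_holomorphically_compose:
  assumes "extends_holomorphically f I" "extends_holomorphically g J" "f ` I \<subseteq> J"
  shows "extends_holomorphically (\<lambda>t. g (f t)) I"
proof -
  obtain F S G T where S: "open S" "of_real ` I \<subseteq> S" "F holomorphic_on S" "\<forall>t\<in>I. F (of_real t) = of_real (f t)"
    and T: "open T" "of_real ` J \<subseteq> T" "G holomorphic_on T" "\<forall>t\<in>J. G (of_real t) = of_real (g t)"
    using assms(1,2) unfolding extends_holomorphically_def by blast
  have "G \<circ> F holomorphic_on S \<inter> F -` T"
    by (rule holomorphic_on_compose_gen[OF holomorphic_on_subset[OF S(3)] T(3)]) auto
  moreover have "open (S \<inter> F -` T)"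
    by (rule continuous_open_preimage[OF holomorphic_on_imp_continuous_on[OF S(3)] S(1) T(1)])
  ultimately show ?thesis
    using S(2,4) T(2,4) assms(3)
    by (intro extends_holomorphicallyI[of "S \<inter> F -` T" _ "G \<circ> F"]) (auto simp: image_subset_iff)
qed

lemma extends_holomorphically_inverse: "extends_holomorphically inverse (- {0})"
  by (rule extends_holomorphicallyI[of "- {0}" _ inverse])
     (auto intro!: holomorphic_intros simp: open_Compl)

lemma extends_holomorphically_divide:
  assumes "extends_holomorphically f I" "extends_holomorphically g I" "\<And>t. t \<in> I \<Longrightarrow> g t \<noteq> 0"
  shows "extends_holomorphically (\<lambda>t. f t / g t) I"
  unfolding divide_inverse using assms
  by (intro extends_holomorphically_mult extends_holomorphically_compose[OF _ extends_holomorphically_inverse])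
     auto

lemma extends_holomorphically_sqrt: "extends_holomorphically sqrt {0<..}"
proof (rule extends_holomorphicallyI[of "- \<real>\<^sub>\<le>\<^sub>0" _ csqrt])
  show "of_real ` {0<..} \<subseteq> - \<real>\<^sub>\<le>\<^sub>0"
    by (auto simp: nonpos_Reals_of_real_iff)
qed (auto intro: holomorphic_on_csqrt simp: csqrt_of_real)

lemma extends_holomorphically_sinc_arccos: "extends_holomorphically sinc_arccos {-1<..<1}"
proof (rule extends_holomorphicallyI[of "ball 0 1" _ "\<lambda>w. sin (Arccos w) / Arccos w"])
  have "Arccos holomorphic_on ball 0 1"
    by (rule holomorphic_on_Arccos) (simp add: cmod_eq_Re)
  moreover have "Arccos w \<noteq> 0" if "w \<in> ball 0 1" for w
    using that cos_Arccos[of w] by (auto simp del: cos_Arccos)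
  ultimately show "(\<lambda>w. sin (Arccos w) / Arccos w) holomorphic_on ball 0 1"
    by (auto intro!: holomorphic_intros)
  show "(of_real ` {-1<..<1} :: complex set) \<subseteq> ball 0 1" by (auto simp: abs_less_iff)
  show "sin (Arccos (of_real u)) / Arccos (of_real u) = of_real (sinc_arccos u)" if "u \<in> {-1<..<1}" for u
  proof -
    have "Arccos (of_real u) = of_real (arccos u)" using that of_real_arccos[of u] by (simp add: abs_le_iff)
    then show ?thesis by (simp add: sinc_arccos_def sin_of_real)
  qed
qed simp

lemma extends_holomorphically_affine: "extends_holomorphically (\<lambda>t. (1 - t) * p + t * q) I"
  by (intro extends_holomorphically_add extends_holomorphically_diff extends_holomorphically_mult
      extends_holomorphically_const extends_holomorphically_ident)

lemma extends_holomorphically_inner_segment: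
  fixes u v w :: "'a::real_inner"
  shows "extends_holomorphically (\<lambda>t. ((1 - t) *\<^sub>R u + t *\<^sub>R v) \<bullet> w) I"
  using extends_holomorphically_affine[of "u \<bullet> w" "v \<bullet> w" I] by (simp add: inner_add_left)

lemma extends_holomorphically_norm_segment:
  fixes u v :: "'a::real_inner"
  assumes "\<And>t. t \<in> I \<Longrightarrow> (1 - t) *\<^sub>R u + t *\<^sub>R v \<noteq> 0"
  shows "extends_holomorphically (\<lambda>t. norm ((1 - t) *\<^sub>R u + t *\<^sub>R v)) I"
proof -
  define c where "c t = (1 - t) *\<^sub>R u + t *\<^sub>R v" for t
  have "c t \<bullet> c t = (1 - t) * (c t \<bullet> u) + t * (c t \<bullet> v)" for t
    by (simp add: c_def[of t] inner_add_right)
  moreover have "c t \<bullet> c t > 0" if "t \<in> I" for t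
    using assms[OF that] by (simp add: c_def)
  moreover have "extends_holomorphically (\<lambda>t. (1 - t) * (c t \<bullet> u) + t * (c t \<bullet> v)) I"
    unfolding c_def
    by (intro extends_holomorphically_add extends_holomorphically_mult extends_holomorphically_affine
        extends_holomorphically_diff extends_holomorphically_const extends_holomorphically_ident
        extends_holomorphically_inner_segment)
  ultimately have "extends_holomorphically (\<lambda>t. sqrt (c t \<bullet> c t)) I"
    by (intro extends_holomorphically_compose[OF _ extends_holomorphically_sqrt]) auto
  then show ?thesis by (simp add: c_def norm_eq_sqrt_inner)
qed

lemma extends_holomorphically_sinc_weight_segment:
  fixes u v :: "'a::real_inner" and X :: "nat \<Rightarrow> 'a"
  assumes "\<And>t. t \<in> I \<Longrightarrow> (1 - t) *\<^sub>R u + t *\<^sub>R v \<noteq> 0"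
    and "\<And>i t. i \<in> K \<Longrightarrow> t \<in> I \<Longrightarrow> \<bar>sgn ((1 - t) *\<^sub>R u + t *\<^sub>R v) \<bullet> X i\<bar> < 1"
    and "\<And>i. i \<in> K \<Longrightarrow> extends_holomorphically (B i) I"
  shows "extends_holomorphically
    (\<lambda>t. \<Sum>i\<in>K. B i t * sinc_arccos (sgn ((1 - t) *\<^sub>R u + t *\<^sub>R v) \<bullet> X i)) I"
proof (intro extends_holomorphically_sum extends_holomorphically_mult assms(3))
  fix i assume i: "i \<in> K"
  define c where "c t = (1 - t) *\<^sub>R u + t *\<^sub>R v" for t
  have "extends_holomorphically (\<lambda>t. c t \<bullet> X i / norm (c t)) I"
    unfolding c_def using assms(1)
    by (intro extends_holomorphically_divide extends_holomorphically_inner_segment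
        extends_holomorphically_norm_segment) auto
  moreover have "c t \<bullet> X i / norm (c t) = sgn (c t) \<bullet> X i" for t
    by (simp add: sgn_div_norm divide_inverse_commute)
  ultimately show "extends_holomorphically (\<lambda>t. sinc_arccos (sgn (c t) \<bullet> X i)) I"
    using assms(2)[OF i]
    by (intro extends_holomorphically_compose[OF _ extends_holomorphically_sinc_arccos])
      (auto simp: abs_less_iff c_def)
qed

lemma extends_holomorphically_frequently_nonzero:
  assumes ext: "extends_holomorphically f {a<..<b}" and t: "t \<in> {a<..<b}" "f t \<noteq> 0"
  shows "\<exists>\<^sub>F s in at_right a. f s \<noteq> 0"
  unfolding frequently_def
proof
  assume "\<forall>\<^sub>F s in at_right a. \<not> f s \<noteq> 0"
  then obtain c0 where c0: "a < c0" "\<And>s. a < s \<Longrightarrow> s < c0 \<Longrightarrow> f s = 0"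
    by (auto simp: eventually_at_right_field)
  define c where "c = min c0 ((a + b) / 2)"
  have c: "a < c" "c < b" "c \<le> c0"
    using c0(1) t(1) by (auto simp: c_def min_def)
  obtain F S where S: "open S" "of_real ` {a<..<b} \<subseteq> S" "F holomorphic_on S"
    and F: "\<forall>t\<in>{a<..<b}. F (of_real t) = of_real (f t)"
    using ext unfolding extends_holomorphically_def by blast
  define T where "T = connected_component_set S (of_real c)"
  have "connected (of_real ` {a<..<b} :: complex set)"
    by (intro connected_continuous_image continuous_intros) auto
  then have segment_T: "of_real ` {a<..<b} \<subseteq> T"
    unfolding T_def using c S(2) by (intro connected_component_maximal) auto
  have limpt: "of_real c islimpt (of_real ` {a<..<c} :: complex set)"
    using c(1) by (intro islimpt_isCont_image islimpt_greaterThanLessThan2)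
      (auto simp: eventually_at_filter)
  have hol: "F holomorphic_on T"
    using S(3) connected_component_subset unfolding T_def by (rule holomorphic_on_subset)
  have "F (of_real t) = 0"
  proof (rule analytic_continuation[OF hol _ _ _ _ limpt])
    show "open T" "connected T" using S(1) by (simp_all add: T_def open_connected_component)
    show "of_real ` {a<..<c} \<subseteq> T" "of_real c \<in> T" "of_real t \<in> T"
      using segment_T c t by auto
    show "F z = 0" if "z \<in> of_real ` {a<..<c}" for z
      using that F c c0(2) by fastforce
  qed
  then show False using F t by simp
qed

section \<open>Density of the barycentric subspace in the great subsphere\<close>

lemma tendsto_sum_sinc_arccos_weights:
  fixes B s :: "nat \<Rightarrow> 'b \<Rightarrow> real"
  assumes K: "finite K" "m \<in> K"
    and B: "\<And>i. i \<in> K \<Longrightarrow> (B i \<longlongrightarrow> (if i = m then 1 else 0)) F"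
    and s: "filterlim (s m) (at_left 1) F"
  shows "((\<lambda>t. \<Sum>i\<in>K. B i t * sinc_arccos (s i t)) \<longlongrightarrow> 1) F"
proof -
  have "((\<lambda>t. B i t * sinc_arccos (s i t)) \<longlongrightarrow> (if i = m then 1 else 0)) F" if i: "i \<in> K" for i
  proof (cases "i = m")
    case True
    show ?thesis
      using tendsto_mult[OF B[OF i] filterlim_compose[OF tendsto_sinc_arccos_1 s]] True by simp
  next
    case False
    have "(B i \<longlongrightarrow> 0) F" using B[OF i] False by simp
    moreover have "\<bar>B i t * sinc_arccos (s i t)\<bar> \<le> \<bar>B i t\<bar> * 1" for t
      unfolding abs_mult by (rule mult_left_mono[OF abs_sinc_arccos_le_1]) simp
    ultimately show ?thesis
      using False by (auto intro: tendsto_0_le[of _ _ _ 1] always_eventually)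
  qed
  then have "((\<lambda>t. \<Sum>i\<in>K. B i t * sinc_arccos (s i t)) \<longlongrightarrow> (\<Sum>i\<in>K. if i = m then 1 else 0)) F"
    by (rule tendsto_sum)
  then show ?thesis using K by simp
qed

lemma closure_if_frequently_tendsto:
  fixes f :: "'b \<Rightarrow> 'a::metric_space"
  assumes "\<exists>\<^sub>F t in F. f t \<in> S" "(f \<longlongrightarrow> l) F"
  shows "l \<in> closure S"
  unfolding closure_approachable
proof (intro allI impI)
  fix e :: real assume "0 < e"
  with assms(2) have "\<forall>\<^sub>F t in F. dist (f t) l < e" by (rule tendstoD)
  then have "\<exists>\<^sub>F t in F. f t \<in> S \<and> dist (f t) l < e"
    using assms(1) by (auto intro: frequently_rev_mp elim: eventually_mono)
  then show "\<exists>y\<in>S. dist y l < e" by (auto dest: frequently_ex)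
qed

lemma segment_to_member_coords:
  fixes X :: "nat \<Rightarrow> 'a::real_vector"
  assumes "x = (\<Sum>i\<le>k. a i *\<^sub>R X i)" "m \<le> k"
  shows "(1 - t) *\<^sub>R x + t *\<^sub>R X m = (\<Sum>i\<le>k. ((1 - t) * a i + (if i = m then t else 0)) *\<^sub>R X i)"
  using sum_delta_scaleR[OF assms(2), of t X]
  by (simp add: assms(1) scaleR_add_left sum.distrib scaleR_sum_right)

lemma segment_to_member_not_parallel:
  fixes X :: "nat \<Rightarrow> 'a::euclidean_space"
  assumes inj: "inj_on X {..k}" and ind: "independent (X ` {..k})" and Xm: "norm (X m) = 1"
    and x: "norm x = 1" "x = (\<Sum>i\<le>k. a i *\<^sub>R X i)"
    and m: "m \<le> k" "0 \<le> a m" "x \<noteq> X m" and t: "0 < t" "t < 1" and i: "i \<le> k"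
  shows "(1 - t) *\<^sub>R x + t *\<^sub>R X m \<noteq> l *\<^sub>R X i"
proof
  assume parallel: "(1 - t) *\<^sub>R x + t *\<^sub>R X m = l *\<^sub>R X i"
  define B where "B j = (1 - t) * a j + (if j = m then t else 0)" for j
  have coeffs: "B j = (if j = i then l else 0)" if "j \<le> k" for j
    using independent_family_coeffs_of_scaled_member[OF inj ind _ i that] parallel
      segment_to_member_coords[OF x(2) m(1), of t]
    by (simp add: B_def)
  have "0 < B m" using m t by (simp add: B_def add_nonneg_pos)
  then have "i = m" using coeffs[OF m(1)] by (auto split: if_splits)
  then have "a j = (if j = m then a m else 0)" if "j \<le> k" for j
    using coeffs[OF that] t by (auto simp: B_def)
  then have "x = (\<Sum>j\<le>k. (if j = m then a m else 0) *\<^sub>R X j)"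
    unfolding x(2) by (intro sum.cong) auto
  then have "x = a m *\<^sub>R X m" by (simp only: sum_delta_scaleR[OF m(1)])
  moreover from this have "a m = 1" using x(1) Xm m(2) by simp
  ultimately show False using m(3) by simp
qed

lemma sgn_segment_to_member:
  fixes X :: "nat \<Rightarrow> 'a::euclidean_space"
  assumes X: "\<forall>i\<le>k. norm (X i) = 1" and inj: "inj_on X {..k}" and ind: "independent (X ` {..k})"
    and x: "norm x = 1" "x = (\<Sum>i\<le>k. a i *\<^sub>R X i)"
    and m: "m \<le> k" "0 \<le> a m" "x \<noteq> X m" and t: "t \<in> {0<..<1}"
  defines "c \<equiv> (1 - t) *\<^sub>R x + t *\<^sub>R X m"
  shows "c \<noteq> 0"
    and "i \<le> k \<Longrightarrow> \<bar>sgn c \<bullet> X i\<bar> < 1"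
    and "(\<Sum>i\<le>k. ((1 - t) * a i + (if i = m then t else 0)) * sinc_arccos (sgn c \<bullet> X i)) \<noteq> 0
      \<Longrightarrow> sgn c \<in> EBS X k"
proof -
  have Xm: "norm (X m) = 1" using X m(1) by simp
  have "0 < t" "t < 1" using t by auto
  note not_parallel = segment_to_member_not_parallel[OF inj ind Xm x m this, folded c_def]
  show c: "c \<noteq> 0" using not_parallel[OF m(1), of 0] by simp
  then have unit: "norm (sgn c) = 1" by (simp add: norm_sgn)
  have sgn_not_parallel: "sgn c \<noteq> l *\<^sub>R X i" if "i \<le> k" for i l
  proof
    assume "sgn c = l *\<^sub>R X i"
    moreover have "c = norm c *\<^sub>R sgn c" using c by (simp add: sgn_div_norm)
    ultimately have "c = (norm c * l) *\<^sub>R X i" by simp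
    then show False using not_parallel[OF that] by simp
  qed
  show "\<bar>sgn c \<bullet> X i\<bar> < 1" if "i \<le> k"
    using abs_inner_unit_less_1[OF unit, of "X i"] X that sgn_not_parallel[OF that, of 1]
      sgn_not_parallel[OF that, of "-1"] by simp
  assume weight: "(\<Sum>i\<le>k. ((1 - t) * a i + (if i = m then t else 0)) * sinc_arccos (sgn c \<bullet> X i)) \<noteq> 0"
  show "sgn c \<in> EBS X k"
  proof (rule in_EBS_if_sinc_weight_nonzero[OF unit X])
    show "\<forall>i\<le>k. sgn c \<noteq> - X i" using sgn_not_parallel[of _ "-1"] by simp
    show "sgn c = (\<Sum>i\<le>k. (((1 - t) * a i + (if i = m then t else 0)) / norm c) *\<^sub>R X i)"
      using segment_to_member_coords[OF x(2) m(1), of t]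
      by (simp add: sgn_div_norm c_def scaleR_sum_right divide_inverse_commute)
    show "(\<Sum>i\<le>k. ((1 - t) * a i + (if i = m then t else 0)) / norm c * sinc_arccos (sgn c \<bullet> X i)) \<noteq> 0"
      using weight c by (simp add: sum_divide_distrib[symmetric])
  qed
qed

lemma in_closure_EBS_via_segment:
  fixes X :: "nat \<Rightarrow> 'a::euclidean_space"
  assumes X: "\<forall>i\<le>k. norm (X i) = 1" and inj: "inj_on X {..k}" and ind: "independent (X ` {..k})"
    and x: "norm x = 1" "x = (\<Sum>i\<le>k. a i *\<^sub>R X i)"
    and m: "m \<le> k" "0 \<le> a m" "x \<noteq> X m"
  shows "x \<in> closure (EBS X k)"
proof -
  define c where "c t = (1 - t) *\<^sub>R x + t *\<^sub>R X m" for t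
  define B where "B i t = (1 - t) * a i + (if i = m then t else 0)" for i t
  define \<psi> where "\<psi> t = (\<Sum>i\<le>k. B i t * sinc_arccos (sgn (c t) \<bullet> X i))" for t
  have Xm: "norm (X m) = 1" using X m(1) by simp
  note sgn_c = sgn_segment_to_member[OF X inj ind x m, folded c_def B_def]
  have "extends_holomorphically \<psi> {0<..<1}"
    unfolding \<psi>_def c_def
  proof (rule extends_holomorphically_sinc_weight_segment)
    show "extends_holomorphically (B i) {0<..<1}" for i
      unfolding B_def
      by (intro extends_holomorphically_add extends_holomorphically_mult extends_holomorphically_diff
          extends_holomorphically_const extends_holomorphically_ident)
        (cases "i = m"; simp add: extends_holomorphically_const extends_holomorphically_ident)
  qed (use sgn_c(1,2) in \<open>auto simp: c_def\<close>)
  moreover have "(\<psi> \<longlongrightarrow> 1) (at_left 1)"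
    unfolding \<psi>_def
  proof (rule tendsto_sum_sinc_arccos_weights)
    show "(B i \<longlongrightarrow> (if i = m then 1 else 0)) (at_left 1)" for i
      unfolding B_def by (auto intro!: tendsto_eq_intros)
    have "((\<lambda>t. sgn (c t) \<bullet> X m) \<longlongrightarrow> sgn (X m) \<bullet> X m) (at_left 1)"
      unfolding c_def using Xm by (auto intro!: tendsto_eq_intros)
    moreover have "\<forall>\<^sub>F t in at_left 1. sgn (c t) \<bullet> X m < 1"
      using eventually_at_left_real[of 0 1]
    proof (rule eventually_mono)
      show "sgn (c t) \<bullet> X m < 1" if "t \<in> {0<..<1}" for t
        using sgn_c(2)[OF that m(1)] by simp
    qed simp
    ultimately show "filterlim (\<lambda>t. sgn (c t) \<bullet> X m) (at_left 1) (at_left 1)"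
      using Xm by (auto intro: tendsto_imp_filterlim_at_left simp: sgn_div_norm dot_square_norm)
  qed (use m in auto)
  then have "\<forall>\<^sub>F t in at_left 1. t \<in> {0<..<1} \<and> \<psi> t > 0"
    by (intro eventually_conj eventually_at_left_real order_tendstoD(1)) auto
  then obtain t1 where "t1 \<in> {0<..<1}" "\<psi> t1 \<noteq> 0"
    using eventually_happens'[of "at_left (1::real)"] by force
  ultimately have "\<exists>\<^sub>F t in at_right 0. \<psi> t \<noteq> 0"
    by (rule extends_holomorphically_frequently_nonzero)
  then have "\<exists>\<^sub>F t in at_right 0. sgn (c t) \<in> EBS X k"
    by (rule frequently_rev_mp)
      (use eventually_at_right_real[of 0 1] sgn_c(3) in \<open>auto elim: eventually_mono simp: \<psi>_def\<close>)
  moreover have "((\<lambda>t. sgn (c t)) \<longlongrightarrow> x) (at_right 0)"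
    unfolding c_def using x(1) by (auto intro!: tendsto_eq_intros simp: sgn_div_norm)
  ultimately show ?thesis by (rule closure_if_frequently_tendsto)
qed

lemma span_inter_usphere_subset_closure_EBS:
  fixes X :: "nat \<Rightarrow> 'a::euclidean_space"
  assumes "1 \<le> k" and X: "\<forall>i\<le>k. norm (X i) = 1" and inj: "inj_on X {..k}"
    and ind: "independent (X ` {..k})"
  shows "span (X ` {..k}) \<inter> usphere \<subseteq> closure (EBS X k)"
proof
  fix x assume x_span: "x \<in> span (X ` {..k}) \<inter> usphere"
  then have x: "norm x = 1" by (simp add: usphere_def)
  obtain a where coords: "x = (\<Sum>i\<le>k. a i *\<^sub>R X i)"
    by (rule span_family_sum_repr[OF inj IntD1[OF x_span]])
  show "x \<in> closure (EBS X k)"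
  proof (cases "\<forall>i\<le>k. a i < 0")
    case True
    then show ?thesis
      using negative_coords_in_EBS[OF assms(1) X inj ind x coords] closure_subset by auto
  next
    case False
    then obtain m where m: "m \<le> k" "0 \<le> a m" by (auto simp: not_less)
    show ?thesis
    proof (cases "x = X m")
      case True
      then show ?thesis using member_in_EBS[OF X inj ind m(1)] closure_subset by auto
    next
      case False
      then show ?thesis by (intro in_closure_EBS_via_segment[OF X inj ind x coords m])
    qed
  qed
qed

lemma Aff_eq_span_inter_usphere:
  fixes X :: "nat \<Rightarrow> 'a::euclidean_space"
  assumes "1 \<le> k" and "\<forall>i\<le>k. X i \<in> usphere" and inj: "inj_on X {..k}"
    and ind: "independent (X ` {..k})"
  shows "Aff X k = span (X ` {..k}) \<inter> usphere"
proof
  have X: "\<forall>i\<le>k. norm (X i) = 1" using assms(2) by (simp add: usphere_def)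
  have usphere_eq: "usphere = sphere (0::'a) 1" by (auto simp: usphere_def)
  have "closed (span (X ` {..k}) \<inter> usphere)"
    unfolding usphere_eq by (intro closed_Int closed_span closed_sphere)
  then show "Aff X k \<subseteq> span (X ` {..k}) \<inter> usphere"
    unfolding Aff_def by (rule closure_minimal[OF EBS_subset_span_inter_usphere[OF X inj ind]])
  show "span (X ` {..k}) \<inter> usphere \<subseteq> Aff X k"
    unfolding Aff_def by (rule span_inter_usphere_subset_closure_EBS[OF assms(1) X inj ind])
qed

theorem mainTheorem5:
  fixes X :: "nat \<Rightarrow> 'a::euclidean_space" and k :: nat
  assumes "1 \<le> k"
    and "\<forall>i\<le>k. X i \<in> usphere"
    and "inj_on X {..k}"
    and "independent (X ` {..k})"
  shows "EBS X k \<subseteq> span (X ` {..k}) \<inter> usphere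
     \<and> Aff X k = span (X ` {..k}) \<inter> usphere
     \<and> (\<forall>(Y :: nat \<Rightarrow> 'a) m. 1 \<le> m \<and> (\<forall>i\<le>m. Y i \<in> usphere) \<and> inj_on Y {..m}
          \<and> independent (Y ` {..m}) \<and> span (Y ` {..m}) = span (X ` {..k})
          \<longrightarrow> Aff Y m = Aff X k)"
proof (intro conjI allI impI)
  show "EBS X k \<subseteq> span (X ` {..k}) \<inter> usphere"
    using assms(2-4) by (intro EBS_subset_span_inter_usphere) (auto simp: usphere_def)
  show Aff_X: "Aff X k = span (X ` {..k}) \<inter> usphere"
    using assms by (rule Aff_eq_span_inter_usphere)
  fix Y :: "nat \<Rightarrow> 'a" and m
  assume "1 \<le> m \<and> (\<forall>i\<le>m. Y i \<in> usphere) \<and> inj_on Y {..m}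
    \<and> independent (Y ` {..m}) \<and> span (Y ` {..m}) = span (X ` {..k})"
  then show "Aff Y m = Aff X k"
    using Aff_eq_span_inter_usphere[of m Y] Aff_X by simp
qed

end
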